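(* Let $P$ be a finite bounded graded poset with rank function $\operatorname{rk}$ and $H=\operatorname{rk}(\hat{1})$, which admits an $R$-labelling. Then the $q$-Zeta volume of $\mathsf{Z}_{P,\operatorname{rk}}$ (the coefficient of $x^H$ in $\mathsf{Z}_{P,\operatorname{rk}}(x)$ multiplied by $[H]!_q$) is a non-negative $q$-analogue of the number of maximal chains of $P$, i.e. it is a polynomial in $q$ with non-negative integer coefficients whose value at $q=1$ is the number of maximal chains of $P$.
   Context: $q$ is an indeterminate; $[n]_q=(q^n-1)/(q-1)$, $[n]!_q=[1]_q\cdots[n]_q$. $\operatorname{rk}$ is the rank function of the graded poset (increasing by $1$ along covers, value $0$ at $\hat{0}$). The $q$-Zeta polynomial $\mathsf{Z}_{P,h}\in\mathbb{Q}(q)[x]$ of a finite poset with height function $h$ ($h(x)<h(y)$ when $y$ covers $x$) is the unique polynomial with $\mathsf{Z}_{P,h}([n]_q)=\sum_{e_1\le\cdots\le e_{n-1}\text{ in }P}q^{h(e_1)+\cdots+h(e_{n-1})}$ for all $n\ge2$; it has degree $\max h$. $R$-labelling: for a set $L$ with an arbitrary relation $\lhd$, a map $\lambda$ from cover relations of $P$ to $L$ such that for all $p\le p'$ there is exactly one maximal chain $p=e_0<\cdots<e_{m+1}=p'$ with $\lambda(e_{i-1},e_i)\lhd\lambda(e_i,e_{i+1})$ for all $1\le i\le m$. *)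

theory Defs
  imports "HOL-Computational_Algebra.Polynomial" "HOL-Computational_Algebra.Fraction_Field"
begin

type_synonym ratfun = "rat poly fract"

definition qvar :: ratfun where
  "qvar = Fract [:0, 1:] 1"

definition ratfun_of_poly :: "rat poly \<Rightarrow> ratfun" where
  "ratfun_of_poly p = Fract p 1"

definition qint :: "nat \<Rightarrow> ratfun" where
  "qint n = (qvar ^ n - 1) / (qvar - 1)"

definition qfact :: "nat \<Rightarrow> ratfun" where
  "qfact n = (\<Prod>i=1..n. qint i)"

definition covers :: "'a::order set \<Rightarrow> 'a \<Rightarrow> 'a \<Rightarrow> bool" where
  "covers P x y \<longleftrightarrow> x \<in> P \<and> y \<in> P \<and> x < y \<and> \<not> (\<exists>z\<in>P. x < z \<and> z < y)"

definition multichains :: "'a::order set \<Rightarrow> nat \<Rightarrow> 'a list set" where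
  "multichains P k = {es. length es = k \<and> set es \<subseteq> P \<and> sorted_wrt (\<le>) es}"

definition qZeta :: "'a::order set \<Rightarrow> ('a \<Rightarrow> nat) \<Rightarrow> ratfun poly" where
  "qZeta P h = (THE Z. \<forall>n\<ge>2. poly Z (qint n) =
      (\<Sum>es\<in>multichains P (n - 1). qvar ^ (\<Sum>e\<leftarrow>es. h e)))"

definition sat_chain :: "'a::order set \<Rightarrow> 'a \<Rightarrow> 'a \<Rightarrow> 'a list \<Rightarrow> bool" where
  "sat_chain P p p' es \<longleftrightarrow> es \<noteq> [] \<and> hd es = p \<and> last es = p' \<and>
      (\<forall>i. Suc i < length es \<longrightarrow> covers P (es ! i) (es ! Suc i))"

(* R-labelling with labels in a type 'b (label set L = UNIV) and arbitrary relation lhd *)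
definition R_labelling :: "'a::order set \<Rightarrow> ('b \<Rightarrow> 'b \<Rightarrow> bool) \<Rightarrow> ('a \<Rightarrow> 'a \<Rightarrow> 'b) \<Rightarrow> bool" where
  "R_labelling P lhd lam \<longleftrightarrow>
     (\<forall>p\<in>P. \<forall>p'\<in>P. p \<le> p' \<longrightarrow>
        (\<exists>!es. sat_chain P p p' es \<and>
           (\<forall>i. i + 2 < length es \<longrightarrow>
               lhd (lam (es ! i) (es ! (i + 1))) (lam (es ! (i + 1)) (es ! (i + 2))))))"

definition maximal_chain :: "'a::order set \<Rightarrow> 'a set \<Rightarrow> bool" where
  "maximal_chain P C \<longleftrightarrow> C \<subseteq> P \<and> Complete_Partial_Order.chain (\<le>) C \<and>
     \<not> (\<exists>D. D \<subseteq> P \<and> Complete_Partial_Order.chain (\<le>) D \<and> C \<subset> D)"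

end

(*
  Every multichain c of P lies on a unique maximal chain m all of whose descents (positions
  where the R-labels do not increase) sit at elements of c: for c = [] this is the R-labelling
  property, and in general one glues the increasing chain from the bottom to the first element
  of c to the chain obtained recursively for the rest of c.  A multichain on m is encoded by the
  multiset of ranks of its elements, so the multichains of length n - 1 attached to m correspond
  to the multisets of size n - 1 in {0..H} containing the descent set D of m.  Their q-weighted
  count is q^(sum D) [n - 1 - |D| + H choose H]_q, which as a function of x = [n]_q is a
  polynomial of degree H with leading coefficient q^(sum D + H(H-1)/2 - |D| H) / [H]!_q.
  Summing over m, [H]!_q times the top coefficient of the q-Zeta polynomial is a sum of one
  power of q per maximal chain.
*)

theory Submission
  imports Defs "HOL-Library.Multiset" "HOL-Computational_Algebra.Polynomial_Factorial"
begin

lemma sum_partition_ex1: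
  assumes "finite A" "finite B" "\<And>a. a \<in> A \<Longrightarrow> \<exists>!b. b \<in> B \<and> R a b"
  shows "sum f A = (\<Sum>b\<in>B. sum f {a\<in>A. R a b})"
proof -
  define g where "g a = (THE b. b \<in> B \<and> R a b)" for a
  have g: "g a \<in> B \<and> R a (g a)" if "a \<in> A" for a
    unfolding g_def using theI'[OF assms(3)[OF that]] .
  have R_iff: "R a b \<longleftrightarrow> g a = b" if "a \<in> A" "b \<in> B" for a b
  proof
    assume "R a b"
    then show "g a = b" unfolding g_def using assms(3)[OF that(1)] that(2) by (intro the1_equality) auto
  next
    assume "g a = b"
    then show "R a b" using g[OF that(1)] by simp
  qed
  have "{a\<in>A. R a b} = {a\<in>A. g a = b}" if "b \<in> B" for b
    using R_iff that by auto
  then have "(\<Sum>b\<in>B. sum f {a\<in>A. R a b}) = (\<Sum>b\<in>B. sum f {a\<in>A. g a = b})"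
    by simp
  also have "\<dots> = sum f A"
    using g by (intro sum.group assms(1,2)) auto
  finally show ?thesis ..
qed

lemma ratfun_of_poly_eq_to_fract: "ratfun_of_poly = to_fract"
  by (simp add: fun_eq_iff ratfun_of_poly_def to_fract_def)

lemma to_fract_power: "to_fract (p ^ n) = to_fract p ^ n"
  by (induction n) simp_all

lemma qvar_power: "qvar ^ n = to_fract (monom 1 n)"
  by (simp add: qvar_def to_fract_def[symmetric] to_fract_power[symmetric] monom_altdef)

lemma qvar_power_eq_iff [simp]: "qvar ^ a = qvar ^ b \<longleftrightarrow> a = b"
  by (simp add: qvar_power monom_eq_iff')

lemma qvar_nonzero [simp]: "qvar \<noteq> 0"
  using qvar_power_eq_iff[of 1 0] qvar_power[of 1] by (auto simp: monom_eq_iff')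

lemma qvar_neq_1 [simp]: "qvar \<noteq> 1"
  using qvar_power_eq_iff[of 1 0] by simp

lemma inj_qint: "inj qint"
  by (rule injI) (simp add: qint_def)

lemma qint_nonzero: "0 < n \<Longrightarrow> qint n \<noteq> 0"
  using qvar_power_eq_iff[of n 0] by (simp add: qint_def)

lemma qfact_nonzero: "qfact n \<noteq> 0"
  by (simp add: qfact_def qint_nonzero)

lemma qfact_Suc: "qfact (Suc n) = qfact n * qint (Suc n)"
  by (simp add: qfact_def)

lemma qfact_eq_prod_lessThan: "qfact n = (\<Prod>i<n. qint (Suc i))"
  by (induction n) (simp_all add: qfact_Suc, simp add: qfact_def)

lemma qint_add: "qint m + qvar ^ m * qint n = qint (m + n)"
  by (simp add: qint_def power_add divide_simps) (simp add: algebra_simps)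

text \<open>The complete homogeneous symmetric polynomial \<open>h\<^sub>k(1, q, \<dots>, q\<^sup>H)\<close>, i.e. the Gaussian
  binomial coefficient \<open>[k + H choose H]\<^sub>q\<close> (see \<open>qfact_mult_qmultichoose\<close>).\<close>

definition qmultichoose :: "nat \<Rightarrow> nat \<Rightarrow> ratfun" where
  "qmultichoose H k = (\<Sum>M\<in>multisets_of_size {..H} k. qvar ^ sum_mset M)"

lemma qmultichoose_0_right: "qmultichoose H 0 = 1"
  by (simp add: qmultichoose_def)

lemma qmultichoose_0_left: "qmultichoose 0 k = 1"
proof -
  have "multisets_of_size {..0} k = {replicate_mset k (0::nat)}"
    by (auto simp: multisets_of_size_def dest: set_mset_subset_singletonD split: if_splits)
  then show ?thesis by (simp add: qmultichoose_def)
qed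

lemma multisets_of_size_Suc_Suc:
  "multisets_of_size {..Suc H} (Suc k) =
     multisets_of_size {..H} (Suc k) \<union> add_mset (Suc H) ` multisets_of_size {..Suc H} k"
proof (intro equalityI subsetI)
  fix M assume M: "M \<in> multisets_of_size {..Suc H} (Suc k)"
  show "M \<in> multisets_of_size {..H} (Suc k) \<union> add_mset (Suc H) ` multisets_of_size {..Suc H} k"
  proof (cases "Suc H \<in># M")
    case True
    then have "M = add_mset (Suc H) (M - {#Suc H#})" by simp
    moreover have "M - {#Suc H#} \<in> multisets_of_size {..Suc H} k"
      using M True by (auto simp: multisets_of_size_def size_Diff_singleton dest: in_diffD)
    ultimately show ?thesis by blast
  next
    case False
    then show ?thesis using M by (auto simp: multisets_of_size_def le_Suc_eq)
  qed
qed (auto simp: multisets_of_size_def)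

lemma qmultichoose_Suc_Suc:
  "qmultichoose (Suc H) (Suc k) = qmultichoose H (Suc k) + qvar ^ Suc H * qmultichoose (Suc H) k"
proof -
  have "multisets_of_size {..H} (Suc k) \<inter> add_mset (Suc H) ` multisets_of_size {..Suc H} k = {}"
    by (auto simp: multisets_of_size_def)
  then have "qmultichoose (Suc H) (Suc k) = qmultichoose H (Suc k) +
      (\<Sum>M\<in>add_mset (Suc H) ` multisets_of_size {..Suc H} k. qvar ^ sum_mset M)"
    unfolding qmultichoose_def multisets_of_size_Suc_Suc by (subst sum.union_disjoint) auto
  also have "(\<Sum>M\<in>add_mset (Suc H) ` multisets_of_size {..Suc H} k. qvar ^ sum_mset M) =
      qvar ^ Suc H * qmultichoose (Suc H) k"
    unfolding qmultichoose_def
    by (subst sum.reindex) (auto simp: inj_on_def power_add sum_distrib_left mult.assoc)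
  finally show ?thesis .
qed

lemma qfact_mult_qmultichoose: "qfact H * qmultichoose H k = (\<Prod>i<H. qint (k + 1 + i))"
proof (induction H arbitrary: k)
  case 0
  then show ?case by (simp add: qmultichoose_0_left qfact_def)
next
  case (Suc H)
  note IH_H = Suc.IH
  show ?case
  proof (induction k)
    case 0
    then show ?case by (simp add: qmultichoose_0_right qfact_eq_prod_lessThan)
  next
    case (Suc k)
    have "qfact (Suc H) * qmultichoose (Suc H) (Suc k) =
        qint (Suc H) * (qfact H * qmultichoose H (Suc k)) + qvar ^ Suc H * (qfact (Suc H) * qmultichoose (Suc H) k)"
      by (simp add: qmultichoose_Suc_Suc qfact_Suc algebra_simps)
    also have "\<dots> = (qint (Suc H) + qvar ^ Suc H * qint (Suc k)) * (\<Prod>i<H. qint (k + 2 + i))"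
      unfolding IH_H Suc.IH prod.lessThan_Suc_shift by (simp add: algebra_simps)
    also have "\<dots> = (\<Prod>i<Suc H. qint (Suc k + 1 + i))"
      unfolding qint_add prod.lessThan_Suc by (simp add: algebra_simps)
    finally show ?case .
  qed
qed

lemma sum_qpower_multisets_containing:
  assumes "finite D" "D \<subseteq> {..H}"
  shows "(\<Sum>M\<in>{M\<in>multisets_of_size {..H} k. D \<subseteq> set_mset M}. qvar ^ sum_mset M) =
    (if card D \<le> k then qvar ^ \<Sum>D * qmultichoose H (k - card D) else 0)"
proof -
  have contains: "D \<subseteq> set_mset M \<longleftrightarrow> mset_set D \<subseteq># M" for M
  proof
    assume "D \<subseteq> set_mset M"
    then show "mset_set D \<subseteq># M"
      unfolding subseteq_mset_def using assms(1)
      by (metis count_mset_set(1,3) count_greater_zero_iff less_one not_le subsetD zero_le)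
  next
    assume "mset_set D \<subseteq># M"
    then show "D \<subseteq> set_mset M" using assms(1) set_mset_mono by fastforce
  qed
  show ?thesis
  proof (cases "card D \<le> k")
    case True
    have "{M\<in>multisets_of_size {..H} k. D \<subseteq> set_mset M} =
        (\<lambda>M. M + mset_set D) ` multisets_of_size {..H} (k - card D)"
    proof (intro equalityI subsetI)
      fix M assume M: "M \<in> {M\<in>multisets_of_size {..H} k. D \<subseteq> set_mset M}"
      then have "mset_set D \<subseteq># M" using contains by blast
      then have "M = (M - mset_set D) + mset_set D" "M - mset_set D \<in> multisets_of_size {..H} (k - card D)"
        using M by (auto simp: multisets_of_size_def size_Diff_submset dest: in_diffD)
      then show "M \<in> (\<lambda>M. M + mset_set D) ` multisets_of_size {..H} (k - card D)" by blast
    qed (use True assms in \<open>auto simp: multisets_of_size_def\<close>)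
    moreover have "sum_mset (mset_set D) = \<Sum>D"
      using sum_unfold_sum_mset[of "\<lambda>x. x" D] by simp
    ultimately show ?thesis
      using True by (simp add: sum.reindex qmultichoose_def power_add sum_distrib_left mult.commute)
  next
    case False
    have empty: "{M\<in>multisets_of_size {..H} k. D \<subseteq> set_mset M} = {}"
      using False size_mset_mono[of "mset_set D"] by (auto simp: multisets_of_size_def contains)
    show ?thesis unfolding empty using False by simp
  qed
qed

lemma poly_qshift_factor:
  "poly [: (r - 1) / (qvar - 1), r :] (qint n) = (qvar ^ n * r - 1) / (qvar - 1)"
  by (simp add: qint_def divide_simps) (simp add: algebra_simps)

text \<open>The \<open>i\<close>-th factor maps \<open>[n]\<^sub>q\<close> to \<open>[n + i - d]\<^sub>q\<close>, so by \<open>qfact_mult_qmultichoose\<close>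
  the polynomial interpolates \<open>qmultichoose H (n - 1 - d)\<close> for \<open>n > d\<close>; for \<open>1 \<le> n \<le> d\<close> the factor
  \<open>i = d - n\<close> vanishes.\<close>

definition qmultichoose_poly :: "nat \<Rightarrow> nat \<Rightarrow> ratfun poly" where
  "qmultichoose_poly H d = smult (inverse (qfact H))
     (\<Prod>i<H. [: (qvar ^ i / qvar ^ d - 1) / (qvar - 1), qvar ^ i / qvar ^ d :])"

lemma poly_qmultichoose_poly:
  assumes "0 < n" "d \<le> H"
  shows "poly (qmultichoose_poly H d) (qint n) = (if d < n then qmultichoose H (n - 1 - d) else 0)"
proof -
  have factor: "poly [: (qvar ^ i / qvar ^ d - 1) / (qvar - 1), qvar ^ i / qvar ^ d :] (qint n) =
      (qvar ^ (n + i) / qvar ^ d - 1) / (qvar - 1)" for i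
    unfolding poly_qshift_factor by (simp add: power_add)
  have "poly (qmultichoose_poly H d) (qint n) =
      inverse (qfact H) * (\<Prod>i<H. (qvar ^ (n + i) / qvar ^ d - 1) / (qvar - 1))"
    unfolding qmultichoose_poly_def poly_smult poly_prod factor ..
  also have "\<dots> = (if d < n then qmultichoose H (n - 1 - d) else 0)"
  proof (cases "d < n")
    case True
    have "(\<Prod>i<H. (qvar ^ (n + i) / qvar ^ d - 1) / (qvar - 1)) = (\<Prod>i<H. qint (n - 1 - d + 1 + i))"
    proof (rule prod.cong[OF refl])
      fix i
      have "qvar ^ (n + i) / qvar ^ d = qvar ^ (n - 1 - d + 1 + i)"
        using True by (simp add: power_diff)
      then show "(qvar ^ (n + i) / qvar ^ d - 1) / (qvar - 1) = qint (n - 1 - d + 1 + i)"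
        by (simp add: qint_def)
    qed
    then show ?thesis
      using True qfact_mult_qmultichoose[of H "n - 1 - d"] qfact_nonzero[of H]
      by (simp add: field_simps)
  next
    case False
    then have "d - n \<in> {..<H}" "(qvar ^ (n + (d - n)) / qvar ^ d - 1) / (qvar - 1) = 0"
      using assms by auto
    then have "(\<Prod>i<H. (qvar ^ (n + i) / qvar ^ d - 1) / (qvar - 1)) = 0"
      by (intro prod_zero) auto
    then show ?thesis using False by simp
  qed
  finally show ?thesis .
qed

lemma coeff_qmultichoose_poly:
  "coeff (qmultichoose_poly H d) H = inverse (qfact H) * (qvar ^ (\<Sum>i<H. i) / qvar ^ (d * H))"
proof -
  let ?f = "\<lambda>i. [: (qvar ^ i / qvar ^ d - 1) / (qvar - 1), qvar ^ i / qvar ^ d :]"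
  have "degree (prod ?f {..<H}) = H"
    by (subst degree_prod_eq_sum_degree) auto
  then have "coeff (prod ?f {..<H}) H = lead_coeff (prod ?f {..<H})"
    by (simp only:)
  also have "\<dots> = (\<Prod>i<H. qvar ^ i / qvar ^ d)"
    by (simp add: lead_coeff_prod)
  also have "\<dots> = qvar ^ (\<Sum>i<H. i) / qvar ^ (d * H)"
    by (induction H) (simp_all add: power_add field_simps)
  finally show ?thesis by (simp add: qmultichoose_poly_def)
qed

lemma card_mult_le_sum:
  fixes D :: "nat set"
  assumes "D \<subseteq> {1..H}"
  shows "card D * H \<le> \<Sum>D + (\<Sum>i<H. i)"
proof -
  have "inj_on (\<lambda>x. H - x) D"
  proof (rule inj_onI)
    fix x y assume "x \<in> D" "y \<in> D" "H - x = H - y"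
    then show "x = y" using assms by (metis atLeastAtMost_iff diff_diff_cancel subsetD)
  qed
  then have "(\<Sum>x\<in>D. H - x) = \<Sum>((\<lambda>x. H - x) ` D)"
    by (simp add: sum.reindex)
  also have "\<dots> \<le> (\<Sum>i<H. i)"
    using assms by (intro sum_mono2) auto
  finally have "(\<Sum>x\<in>D. H - x) \<le> (\<Sum>i<H. i)" .
  moreover have "card D * H = \<Sum>D + (\<Sum>x\<in>D. H - x)"
    using assms by (simp add: sum.distrib[symmetric] subset_iff)
  ultimately show ?thesis by linarith
qed

lemma qZeta_eqI:
  assumes "\<And>n. 2 \<le> n \<Longrightarrow> poly Z (qint n) = (\<Sum>es\<in>multichains P (n - 1). qvar ^ (\<Sum>e\<leftarrow>es. h e))"
  shows "qZeta P h = Z"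
  unfolding qZeta_def
proof (rule the_equality)
  fix Z' assume Z': "\<forall>n\<ge>2. poly Z' (qint n) = (\<Sum>es\<in>multichains P (n - 1). qvar ^ (\<Sum>e\<leftarrow>es. h e))"
  have "qint ` {2..} \<subseteq> {x. poly (Z' - Z) x = 0}" using Z' assms by auto
  moreover have "infinite (qint ` {2::nat..})"
    using inj_qint by (simp add: finite_image_iff inj_on_subset infinite_Ici)
  ultimately show "Z' = Z"
    using poly_roots_finite[of "Z' - Z"] finite_subset by auto
qed (use assms in simp)

lemma sat_chain_iff:
  "sat_chain P p p' m \<longleftrightarrow> m \<noteq> [] \<and> hd m = p \<and> last m = p' \<and> successively (covers P) m"
  unfolding sat_chain_def successively_conv_nth by simp

lemma sat_chain_append_iff:
  "sat_chain P p p' (xs @ e # ys) \<longleftrightarrow> sat_chain P p e (xs @ [e]) \<and> sat_chain P e p' (e # ys)"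
  by (cases "xs = []") (auto simp: sat_chain_iff successively_append_iff)

lemma sat_chain_sorted: "sat_chain P p p' m \<Longrightarrow> sorted_wrt (<) m"
  unfolding sat_chain_iff successively_conv_sorted_wrt[symmetric, OF transp_on_less]
  by (auto elim: successively_mono simp: covers_def)

lemma sat_chain_subset: "sat_chain P p p' m \<Longrightarrow> p \<in> P \<Longrightarrow> set m \<subseteq> P"
proof (induction m arbitrary: p)
  case (Cons x m)
  then show ?case by (cases m) (auto simp: sat_chain_iff covers_def)
qed simp

lemma nth_append_Cons_eq_nth_snoc: "j \<le> length xs \<Longrightarrow> (xs @ e # ys) ! j = (xs @ [e]) ! j"
  by (cases "j = length xs") (auto simp: nth_append)

locale R_labelled_poset =
  fixes P :: "'a::order set" and lhd :: "'b \<Rightarrow> 'b \<Rightarrow> bool" and lam :: "'a \<Rightarrow> 'a \<Rightarrow> 'b"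
  assumes R_labelling: "R_labelling P lhd lam"
begin

text \<open>Descents are recorded by the position of the middle element of two consecutive covers
  whose labels are not \<open>lhd\<close>-related; on a maximal chain this position is its rank.\<close>

definition descents :: "'a list \<Rightarrow> nat set" where
  "descents m = {Suc i | i. i + 2 < length m \<and>
     \<not> lhd (lam (m ! i) (m ! (i + 1))) (lam (m ! (i + 1)) (m ! (i + 2)))}"

lemma ex1_sat_chain_without_descents:
  "p \<in> P \<Longrightarrow> p' \<in> P \<Longrightarrow> p \<le> p' \<Longrightarrow> \<exists>!m. sat_chain P p p' m \<and> descents m = {}"
  using R_labelling unfolding R_labelling_def descents_def by auto

lemma ex_sat_chain: "p \<in> P \<Longrightarrow> p' \<in> P \<Longrightarrow> p \<le> p' \<Longrightarrow> \<exists>m. sat_chain P p p' m"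
  using ex1_sat_chain_without_descents by (meson ex1_implies_ex)

lemma descents_subset: "descents m \<subseteq> {1..<length m - 1}"
  by (auto simp: descents_def)

lemma descent_elements_subset: "(!) m ` descents m \<subseteq> set (butlast m) \<inter> set (tl m)"
proof
  fix x assume "x \<in> (!) m ` descents m"
  then obtain i where i: "i + 2 < length m" "x = m ! Suc i" by (auto simp: descents_def)
  then have "butlast m ! Suc i \<in> set (butlast m)" "tl m ! i \<in> set (tl m)" by simp_all
  moreover have "butlast m ! Suc i = x" "tl m ! i = x" using i by (simp_all add: nth_butlast nth_tl)
  ultimately show "x \<in> set (butlast m) \<inter> set (tl m)" by simp
qed

lemma descents_append_left:
  "(!) (xs @ [e]) ` descents (xs @ [e]) \<subseteq> (!) (xs @ e # ys) ` descents (xs @ e # ys)"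
proof
  fix x assume "x \<in> (!) (xs @ [e]) ` descents (xs @ [e])"
  then obtain i where i: "Suc i \<in> descents (xs @ [e])" "x = (xs @ [e]) ! Suc i"
    by (auto simp: descents_def)
  then have "i + 2 \<le> length xs" by (auto simp: descents_def)
  note agree = nth_append_Cons_eq_nth_snoc[of _ xs e ys]
  have "Suc i \<in> descents (xs @ e # ys)"
    using \<open>i + 2 \<le> length xs\<close> i(1) agree[of i] agree[of "i + 1"] agree[of "i + 2"] by (auto simp: descents_def)
  then show "x \<in> (!) (xs @ e # ys) ` descents (xs @ e # ys)"
    using i(2) \<open>i + 2 \<le> length xs\<close> agree[of "Suc i"] by (auto intro!: image_eqI)
qed

lemma descents_append_right:
  "(!) (e # ys) ` descents (e # ys) \<subseteq> (!) (xs @ e # ys) ` descents (xs @ e # ys)"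
proof
  fix x assume "x \<in> (!) (e # ys) ` descents (e # ys)"
  then obtain i where i: "Suc i \<in> descents (e # ys)" "x = (e # ys) ! Suc i"
    by (auto simp: descents_def)
  have shift: "(xs @ e # ys) ! (length xs + j) = (e # ys) ! j" for j
    by (rule nth_append_length_plus)
  have "Suc (length xs + i) \<in> descents (xs @ e # ys)"
    using i(1) shift[of i] shift[of "Suc i"] shift[of "Suc (Suc i)"]
    by (auto simp: descents_def add.commute numeral_2_eq_2)
  then show "x \<in> (!) (xs @ e # ys) ` descents (xs @ e # ys)"
    using i(2) shift[of "Suc i"] by (auto intro!: image_eqI)
qed

lemma descents_append:
  "(!) (xs @ e # ys) ` descents (xs @ e # ys) \<subseteq>
     insert e ((!) (xs @ [e]) ` descents (xs @ [e]) \<union> (!) (e # ys) ` descents (e # ys))"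
proof
  fix x assume "x \<in> (!) (xs @ e # ys) ` descents (xs @ e # ys)"
  then obtain i where i: "Suc i \<in> descents (xs @ e # ys)" "x = (xs @ e # ys) ! Suc i"
    by (auto simp: descents_def)
  consider "i + 2 \<le> length xs" | "i + 1 = length xs" | "length xs \<le> i" by linarith
  then show "x \<in> insert e ((!) (xs @ [e]) ` descents (xs @ [e]) \<union> (!) (e # ys) ` descents (e # ys))"
  proof cases
    case 1
    note agree = nth_append_Cons_eq_nth_snoc[of _ xs e ys]
    have "Suc i \<in> descents (xs @ [e])"
      using 1 i(1) agree[of i] agree[of "i + 1"] agree[of "i + 2"] by (auto simp: descents_def)
    then show ?thesis using 1 i(2) agree[of "Suc i"] by auto
  next
    case 2
    then show ?thesis using i(2) by simp
  next
    case 3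
    define k where "k = i - length xs"
    have shift: "(xs @ e # ys) ! (length xs + j) = (e # ys) ! j" for j
      by (rule nth_append_length_plus)
    have i_eq: "i = length xs + k" using 3 k_def by simp
    have "Suc k \<in> descents (e # ys)"
      using i(1) shift[of k] shift[of "Suc k"] shift[of "Suc (Suc k)"]
      unfolding i_eq by (auto simp: descents_def numeral_2_eq_2)
    then have "x \<in> (!) (e # ys) ` descents (e # ys)"
      using i(2) shift[of "Suc k"] unfolding i_eq by (metis image_eqI add_Suc_right)
    then show ?thesis by blast
  qed
qed

lemma sat_chain_descents_within_join:
  assumes "sat_chain P p e (xs @ [e])" "descents (xs @ [e]) = {}"
    and "sat_chain P e p' (e # ys)" "set c \<subseteq> set (e # ys)"
    and "(!) (e # ys) ` descents (e # ys) \<subseteq> set c"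
  shows "sat_chain P p p' (xs @ e # ys) \<and> set (e # c) \<subseteq> set (xs @ e # ys) \<and>
         (!) (xs @ e # ys) ` descents (xs @ e # ys) \<subseteq> set (e # c)"
proof -
  have "(!) (xs @ e # ys) ` descents (xs @ e # ys) \<subseteq> set (e # c)"
    using descents_append[of xs e ys] assms(2,5) by auto
  then show ?thesis
    using assms(1,3,4) sat_chain_append_iff[THEN iffD2, of P p e xs p' ys] by auto
qed

lemma sat_chain_descents_within_split:
  assumes m: "sat_chain P p p' m" "set (e # c) \<subseteq> set m" "(!) m ` descents m \<subseteq> set (e # c)"
    and e_least: "\<forall>x\<in>set c. e \<le> x"
  obtains xs ys where "m = xs @ e # ys"
    "sat_chain P p e (xs @ [e])" "descents (xs @ [e]) = {}"
    "sat_chain P e p' (e # ys)" "set c \<subseteq> set (e # ys)"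
    "(!) (e # ys) ` descents (e # ys) \<subseteq> set c"
proof -
  obtain xs ys where split: "m = xs @ e # ys" using m(2) split_list[of e m] by auto
  have "sorted_wrt (<) (xs @ e # ys)" using sat_chain_sorted m(1) split by blast
  then have below: "\<forall>x\<in>set xs. x < e" and above: "\<forall>y\<in>set ys. e < y"
    by (simp_all add: sorted_wrt_append)
  have "(!) (xs @ [e]) ` descents (xs @ [e]) \<subseteq> set xs \<inter> set (e # c)"
    using descent_elements_subset[of "xs @ [e]"] descents_append_left[of xs e ys] m(3) split
    by auto
  then have "descents (xs @ [e]) = {}" using below e_least by fastforce
  moreover have "(!) (e # ys) ` descents (e # ys) \<subseteq> set c"
    using descent_elements_subset[of "e # ys"] descents_append_right[of e ys xs] m(3) split above
    by fastforce
  moreover have "set c \<subseteq> set (e # ys)"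
    using m(2) split below e_least by fastforce
  moreover have "sat_chain P p e (xs @ [e])" "sat_chain P e p' (e # ys)"
    using sat_chain_append_iff[THEN iffD1, OF m(1)[unfolded split]] by blast+
  ultimately show ?thesis using split that by blast
qed

theorem ex1_sat_chain_descents_within:
  assumes "sorted_wrt (\<le>) c" "p \<in> P" "p' \<in> P" "p \<le> p'"
    and "set c \<subseteq> {x\<in>P. p \<le> x \<and> x \<le> p'}"
  shows "\<exists>!m. sat_chain P p p' m \<and> set c \<subseteq> set m \<and> (!) m ` descents m \<subseteq> set c"
  using assms
proof (induction c arbitrary: p)
  case Nil
  then show ?case using ex1_sat_chain_without_descents by simp
next
  case (Cons e c)
  then have e: "e \<in> P" "p \<le> e" "e \<le> p'" and e_least: "\<forall>x\<in>set c. e \<le> x" by auto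
  obtain m1 where m1: "sat_chain P p e m1" "descents m1 = {}"
    and m1_unique: "\<And>m. sat_chain P p e m \<Longrightarrow> descents m = {} \<Longrightarrow> m = m1"
    using ex1_sat_chain_without_descents[OF Cons.prems(2) e(1,2)] by blast
  have "\<exists>!m. sat_chain P e p' m \<and> set c \<subseteq> set m \<and> (!) m ` descents m \<subseteq> set c"
    using Cons.prems e e_least by (intro Cons.IH) auto
  then obtain m2 where m2: "sat_chain P e p' m2 \<and> set c \<subseteq> set m2 \<and> (!) m2 ` descents m2 \<subseteq> set c"
    and m2_unique: "\<And>m. sat_chain P e p' m \<and> set c \<subseteq> set m \<and> (!) m ` descents m \<subseteq> set c \<Longrightarrow> m = m2"
    by (rule ex1E) iprover
  obtain xs ys where m1_snoc: "m1 = xs @ [e]" and m2_cons: "m2 = e # ys"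
    using m1(1) m2 unfolding sat_chain_def
    by (metis append_butlast_last_id list.collapse)
  show ?case
  proof (rule ex1I)
    show "sat_chain P p p' (xs @ e # ys) \<and> set (e # c) \<subseteq> set (xs @ e # ys) \<and>
      (!) (xs @ e # ys) ` descents (xs @ e # ys) \<subseteq> set (e # c)"
      using m1 m2 unfolding m1_snoc m2_cons by (intro sat_chain_descents_within_join) simp_all
  next
    fix m assume "sat_chain P p p' m \<and> set (e # c) \<subseteq> set m \<and> (!) m ` descents m \<subseteq> set (e # c)"
    then have m: "sat_chain P p p' m" "set (e # c) \<subseteq> set m" "(!) m ` descents m \<subseteq> set (e # c)"
      by simp_all
    obtain xs' ys' where split: "m = xs' @ e # ys'"
      and "sat_chain P p e (xs' @ [e])" "descents (xs' @ [e]) = {}"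
      and "sat_chain P e p' (e # ys')" "set c \<subseteq> set (e # ys')"
      and "(!) (e # ys') ` descents (e # ys') \<subseteq> set c"
      by (rule sat_chain_descents_within_split[OF m e_least])
    then have "xs' @ [e] = xs @ [e]" "e # ys' = e # ys"
      using m1_unique m2_unique unfolding m1_snoc m2_cons by blast+
    then show "m = xs @ e # ys" using split by simp
  qed
qed

end

locale R_labelled_graded_poset = R_labelled_poset P lhd lam
  for P :: "'a::order set" and lhd :: "'b \<Rightarrow> 'b \<Rightarrow> bool" and lam :: "'a \<Rightarrow> 'a \<Rightarrow> 'b" +
  fixes bot top :: 'a and rk :: "'a \<Rightarrow> nat"
  assumes finite_P: "finite P"
    and bot_in_P: "bot \<in> P" and bot_least: "\<forall>x\<in>P. bot \<le> x"
    and top_in_P: "top \<in> P" and top_greatest: "\<forall>x\<in>P. x \<le> top"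
    and rank_bot: "rk bot = 0"
    and rank_cover: "\<forall>x y. covers P x y \<longrightarrow> rk y = rk x + 1"
begin

lemma sat_chain_rank:
  assumes "sat_chain P p p' m" "i < length m"
  shows "rk (m ! i) = rk p + i"
  using assms(2)
proof (induction i)
  case 0
  then show ?case using assms(1) by (auto simp: sat_chain_def hd_conv_nth)
next
  case (Suc i)
  then have "covers P (m ! i) (m ! Suc i)" using assms(1) by (auto simp: sat_chain_def)
  then show ?case using Suc rank_cover by simp
qed

lemma sat_chain_length:
  assumes "sat_chain P p p' m"
  shows "rk p' = rk p + (length m - 1)"
proof -
  have "m \<noteq> []" "last m = p'" using assms by (auto simp: sat_chain_def)
  then show ?thesis using sat_chain_rank[OF assms, of "length m - 1"] by (simp add: last_conv_nth)
qed

lemma rank_less: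
  assumes "p \<in> P" "p' \<in> P" "p < p'"
  shows "rk p < rk p'"
proof -
  obtain m where m: "sat_chain P p p' m"
    using ex_sat_chain assms less_imp_le by blast
  then have "hd m \<noteq> last m" "m \<noteq> []" using assms(3) by (auto simp: sat_chain_def)
  then have "length m \<noteq> 1" by (cases m) auto
  then show ?thesis using sat_chain_length[OF m] \<open>m \<noteq> []\<close> by (cases m) auto
qed

lemma rank_mono: "p \<in> P \<Longrightarrow> p' \<in> P \<Longrightarrow> p \<le> p' \<Longrightarrow> rk p \<le> rk p'"
  using rank_less[of p p'] by (auto simp: le_less)

definition maximal_chain_lists :: "'a list set" where
  "maximal_chain_lists = {m. sat_chain P bot top m}"

lemma length_maximal_chain_list: "m \<in> maximal_chain_lists \<Longrightarrow> length m = Suc (rk top)"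
  unfolding maximal_chain_lists_def using sat_chain_length rank_bot
  by (fastforce simp: sat_chain_def)

lemma rank_nth_maximal_chain_list: "m \<in> maximal_chain_lists \<Longrightarrow> i < length m \<Longrightarrow> rk (m ! i) = i"
  unfolding maximal_chain_lists_def using sat_chain_rank rank_bot by fastforce

lemma nth_rank_maximal_chain_list: "m \<in> maximal_chain_lists \<Longrightarrow> x \<in> set m \<Longrightarrow> m ! rk x = x"
  by (metis rank_nth_maximal_chain_list in_set_conv_nth)

lemma maximal_chain_list_subset: "m \<in> maximal_chain_lists \<Longrightarrow> set m \<subseteq> P"
  unfolding maximal_chain_lists_def using sat_chain_subset bot_in_P by blast

lemma maximal_chain_list_mono:
  assumes "m \<in> maximal_chain_lists" "i \<le> j" "j < length m"
  shows "m ! i \<le> m ! j"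
proof (cases "i = j")
  case False
  then show ?thesis
    using assms sat_chain_sorted[of P bot top m] unfolding maximal_chain_lists_def
    by (auto simp: sorted_wrt_iff_nth_less intro: less_imp_le)
qed simp

lemma chain_maximal_chain_list:
  "m \<in> maximal_chain_lists \<Longrightarrow> Complete_Partial_Order.chain (\<le>) (set m)"
  unfolding chain_def by (metis maximal_chain_list_mono in_set_conv_nth nle_le)

lemma finite_maximal_chain_lists: "finite maximal_chain_lists"
proof (rule finite_subset)
  show "maximal_chain_lists \<subseteq> {m. set m \<subseteq> P \<and> length m = Suc (rk top)}"
    using maximal_chain_list_subset length_maximal_chain_list by auto
  show "finite {m. set m \<subseteq> P \<and> length m = Suc (rk top)}"
    using finite_P by (rule finite_lists_length_eq)
qed

lemma card_set_maximal_chain_list: "m \<in> maximal_chain_lists \<Longrightarrow> card (set m) = Suc (rk top)"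
  by (metis distinct_card distinct_conv_nth length_maximal_chain_list rank_nth_maximal_chain_list)

lemma inj_on_set_maximal_chain_lists: "inj_on set maximal_chain_lists"
proof
  fix m m' assume m: "m \<in> maximal_chain_lists" "m' \<in> maximal_chain_lists" "set m = set m'"
  show "m = m'"
  proof (rule nth_equalityI)
    show "length m = length m'" using m length_maximal_chain_list by simp
    fix i assume "i < length m"
    then show "m ! i = m' ! i"
      using m nth_rank_maximal_chain_list rank_nth_maximal_chain_list by (metis nth_mem)
  qed
qed

lemma sorted_list_of_chain:
  assumes "C \<subseteq> P" "Complete_Partial_Order.chain (\<le>) C"
  obtains c where "sorted_wrt (\<le>) c" "set c = C"
proof -
  obtain xs where xs: "set xs = C" using finite_list finite_subset[OF assms(1) finite_P] by blast
  have "sorted_wrt (\<lambda>x y. rk x \<le> rk y) (sort_key rk xs)"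
    using sorted_sort_key[of rk xs] by (simp add: sorted_wrt_map)
  then have "sorted_wrt (\<le>) (sort_key rk xs)"
  proof (rule sorted_wrt_mono_rel[rotated])
    fix x y assume xy: "x \<in> set (sort_key rk xs)" "y \<in> set (sort_key rk xs)" "rk x \<le> rk y"
    then have "x \<in> C" "y \<in> C" using xs by auto
    then have "x \<le> y \<or> y \<le> x" using chainD[OF assms(2)] by blast
    moreover have "\<not> y < x" using rank_less[of y x] \<open>x \<in> C\<close> \<open>y \<in> C\<close> assms(1) xy(3) by auto
    ultimately show "x \<le> y" by (auto simp: le_less)
  qed
  then show ?thesis using that xs by simp
qed

lemma chain_subset_maximal_chain_list:
  assumes "C \<subseteq> P" "Complete_Partial_Order.chain (\<le>) C"
  obtains m where "m \<in> maximal_chain_lists" "C \<subseteq> set m"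
proof -
  obtain c where c: "sorted_wrt (\<le>) c" "set c = C" using sorted_list_of_chain assms .
  have "\<exists>!m. sat_chain P bot top m \<and> set c \<subseteq> set m \<and> (!) m ` descents m \<subseteq> set c"
    using c assms bot_in_P top_in_P bot_least top_greatest
    by (intro ex1_sat_chain_descents_within) auto
  then obtain m where "sat_chain P bot top m" "set c \<subseteq> set m"
    using ex1_implies_ex by blast
  then show ?thesis using that c unfolding maximal_chain_lists_def by blast
qed

lemma maximal_chain_iff: "maximal_chain P C \<longleftrightarrow> C \<in> set ` maximal_chain_lists"
proof
  assume "maximal_chain P C"
  then have C: "C \<subseteq> P" "Complete_Partial_Order.chain (\<le>) C"
    and C_max: "\<not> (\<exists>D. D \<subseteq> P \<and> Complete_Partial_Order.chain (\<le>) D \<and> C \<subset> D)"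
    unfolding maximal_chain_def by simp_all
  obtain m where m: "m \<in> maximal_chain_lists" "C \<subseteq> set m"
    using chain_subset_maximal_chain_list[OF C] .
  then have "C = set m"
    using C_max maximal_chain_list_subset[OF m(1)] chain_maximal_chain_list[OF m(1)] by blast
  then show "C \<in> set ` maximal_chain_lists" using m(1) by blast
next
  assume "C \<in> set ` maximal_chain_lists"
  then obtain m where m: "m \<in> maximal_chain_lists" "C = set m" by blast
  have "\<not> set m \<subset> D" if D: "D \<subseteq> P" "Complete_Partial_Order.chain (\<le>) D" for D
  proof
    assume "set m \<subset> D"
    obtain m' where m': "m' \<in> maximal_chain_lists" "D \<subseteq> set m'"
      using chain_subset_maximal_chain_list[OF D] .
    then have "card (set m) < card (set m')"
      using \<open>set m \<subset> D\<close> by (meson finite_set psubset_card_mono psubset_subset_trans)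
    then show False using card_set_maximal_chain_list m(1) m'(1) by simp
  qed
  then show "maximal_chain P C"
    unfolding maximal_chain_def m(2)
    using maximal_chain_list_subset[OF m(1)] chain_maximal_chain_list[OF m(1)] by blast
qed

lemma card_maximal_chains: "card {C. maximal_chain P C} = card maximal_chain_lists"
proof -
  have "{C. maximal_chain P C} = set ` maximal_chain_lists" using maximal_chain_iff by blast
  then show ?thesis using inj_on_set_maximal_chain_lists by (simp add: card_image)
qed

lemma ex1_maximal_chain_list_of_multichain:
  assumes "c \<in> multichains P k"
  shows "\<exists>!m. m \<in> maximal_chain_lists \<and> set c \<subseteq> set m \<and> (!) m ` descents m \<subseteq> set c"
proof -
  have "\<exists>!m. sat_chain P bot top m \<and> set c \<subseteq> set m \<and> (!) m ` descents m \<subseteq> set c"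
    using assms bot_in_P top_in_P bot_least top_greatest
    by (intro ex1_sat_chain_descents_within) (auto simp: multichains_def)
  then show ?thesis unfolding maximal_chain_lists_def by simp
qed

lemma finite_multichains: "finite (multichains P k)"
proof (rule finite_subset)
  show "multichains P k \<subseteq> {c. set c \<subseteq> P \<and> length c = k}"
    by (auto simp: multichains_def)
  show "finite {c. set c \<subseteq> P \<and> length c = k}"
    using finite_P by (rule finite_lists_length_eq)
qed

lemma descents_maximal_chain_list:
  "m \<in> maximal_chain_lists \<Longrightarrow> descents m \<subseteq> {1..<rk top}"
  using descents_subset[of m] length_maximal_chain_list by simp

definition multichain_of_ranks :: "'a list \<Rightarrow> nat multiset \<Rightarrow> 'a list" where
  "multichain_of_ranks m M = map ((!) m) (sorted_list_of_multiset M)"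

lemma ranks_multichain_of_ranks:
  assumes "m \<in> maximal_chain_lists" "set_mset M \<subseteq> {..rk top}"
  shows "map rk (multichain_of_ranks m M) = sorted_list_of_multiset M"
  using assms rank_nth_maximal_chain_list length_maximal_chain_list
  by (auto simp: multichain_of_ranks_def intro!: map_idI)

lemma multichain_of_ranks_on_maximal_chain_list:
  assumes m: "m \<in> maximal_chain_lists"
    and M: "M \<in> multisets_of_size {..rk top} k" "descents m \<subseteq> set_mset M"
  shows "multichain_of_ranks m M \<in> multichains P k"
    and "set (multichain_of_ranks m M) \<subseteq> set m"
    and "(!) m ` descents m \<subseteq> set (multichain_of_ranks m M)"
proof -
  let ?c = "multichain_of_ranks m M"
  have index: "i < length m" if "i \<in># M" for i
    using that M(1) length_maximal_chain_list[OF m] by (auto simp: multisets_of_size_def)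
  have "sorted_wrt (\<le>) ?c"
    unfolding multichain_of_ranks_def sorted_wrt_map
    by (rule sorted_wrt_mono_rel[OF _ sorted_sorted_list_of_multiset])
      (use index maximal_chain_list_mono[OF m] in auto)
  moreover show on_m: "set ?c \<subseteq> set m"
    using index by (auto simp: multichain_of_ranks_def)
  moreover have "length ?c = k"
    using M(1) mset_sorted_list_of_multiset[of M] size_mset
    by (metis length_map multisets_of_size_size multichain_of_ranks_def)
  ultimately show "?c \<in> multichains P k"
    using maximal_chain_list_subset[OF m] by (auto simp: multichains_def)
  show "(!) m ` descents m \<subseteq> set ?c"
    using M(2) by (auto simp: multichain_of_ranks_def)
qed

lemma multichain_of_ranks_of_multichain:
  assumes m: "m \<in> maximal_chain_lists"
    and c: "c \<in> multichains P k" "set c \<subseteq> set m" "(!) m ` descents m \<subseteq> set c"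
  shows "multichain_of_ranks m (mset (map rk c)) = c"
    and "mset (map rk c) \<in> multisets_of_size {..rk top} k"
    and "descents m \<subseteq> set_mset (mset (map rk c))"
proof -
  have "sorted_wrt (\<le>) c" using c(1) by (simp add: multichains_def)
  then have "sorted (map rk c)"
    unfolding sorted_wrt_map
    by (rule sorted_wrt_mono_rel[rotated]) (use c(2) maximal_chain_list_subset[OF m] rank_mono in blast)
  then have "sorted_list_of_multiset (mset (map rk c)) = map rk c"
    by (simp only: sorted_list_of_multiset_mset sorted_sort_id)
  then have "multichain_of_ranks m (mset (map rk c)) = map (\<lambda>x. m ! rk x) c"
    by (simp only: multichain_of_ranks_def map_map comp_def)
  also have "\<dots> = c"
    using c(2) nth_rank_maximal_chain_list[OF m] by (intro map_idI) auto
  finally show "multichain_of_ranks m (mset (map rk c)) = c" .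
  have "rk ` set c \<subseteq> {..rk top}"
    using c(2) length_maximal_chain_list[OF m] rank_nth_maximal_chain_list[OF m]
    by (fastforce simp: in_set_conv_nth)
  then show "mset (map rk c) \<in> multisets_of_size {..rk top} k"
    using c(1) by (auto simp: multisets_of_size_def multichains_def)
  show "descents m \<subseteq> set_mset (mset (map rk c))"
  proof
    fix i assume i: "i \<in> descents m"
    then have "i < length m" using descents_subset by fastforce
    then show "i \<in> set_mset (mset (map rk c))"
      using c(3) i rank_nth_maximal_chain_list[OF m] by (force simp: image_iff)
  qed
qed

lemma multichains_on_maximal_chain_list:
  assumes m: "m \<in> maximal_chain_lists"
  shows "{c\<in>multichains P k. set c \<subseteq> set m \<and> (!) m ` descents m \<subseteq> set c} =
    multichain_of_ranks m ` {M\<in>multisets_of_size {..rk top} k. descents m \<subseteq> set_mset M}"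
proof (intro equalityI subsetI)
  fix c assume "c \<in> {c\<in>multichains P k. set c \<subseteq> set m \<and> (!) m ` descents m \<subseteq> set c}"
  then have c: "c \<in> multichains P k" "set c \<subseteq> set m" "(!) m ` descents m \<subseteq> set c" by simp_all
  show "c \<in> multichain_of_ranks m ` {M\<in>multisets_of_size {..rk top} k. descents m \<subseteq> set_mset M}"
    using multichain_of_ranks_of_multichain[OF m c] by (intro image_eqI[of _ _ "mset (map rk c)"]) simp_all
qed (use multichain_of_ranks_on_maximal_chain_list[OF m] in blast)

lemma sum_multichains_on_maximal_chain_list:
  assumes m: "m \<in> maximal_chain_lists"
  shows "(\<Sum>c\<in>{c\<in>multichains P k. set c \<subseteq> set m \<and> (!) m ` descents m \<subseteq> set c}. qvar ^ (\<Sum>e\<leftarrow>c. rk e)) =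
    (\<Sum>M\<in>{M\<in>multisets_of_size {..rk top} k. descents m \<subseteq> set_mset M}. qvar ^ sum_mset M)"
proof -
  let ?Y = "{M\<in>multisets_of_size {..rk top} k. descents m \<subseteq> set_mset M}"
  have ranks: "map rk (multichain_of_ranks m M) = sorted_list_of_multiset M" if "M \<in> ?Y" for M
    using that ranks_multichain_of_ranks[OF m] by (simp add: multisets_of_size_def)
  have "inj_on (multichain_of_ranks m) ?Y"
    by (rule inj_onI) (metis ranks mset_sorted_list_of_multiset)
  then have "(\<Sum>c\<in>multichain_of_ranks m ` ?Y. qvar ^ (\<Sum>e\<leftarrow>c. rk e)) =
      (\<Sum>M\<in>?Y. qvar ^ (\<Sum>e\<leftarrow>multichain_of_ranks m M. rk e))"
    by (simp add: sum.reindex)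
  also have "\<dots> = (\<Sum>M\<in>?Y. qvar ^ sum_mset M)"
  proof (rule sum.cong[OF refl])
    fix M assume "M \<in> ?Y"
    then have "(\<Sum>e\<leftarrow>multichain_of_ranks m M. rk e) = sum_list (sorted_list_of_multiset M)"
      by (simp only: ranks)
    also have "\<dots> = sum_mset M"
      by (metis mset_sorted_list_of_multiset sum_mset_sum_list)
    finally show "qvar ^ (\<Sum>e\<leftarrow>multichain_of_ranks m M. rk e) = qvar ^ sum_mset M" by simp
  qed
  finally show ?thesis unfolding multichains_on_maximal_chain_list[OF m] .
qed

lemma qZeta_eq:
  "qZeta P rk = (\<Sum>m\<in>maximal_chain_lists.
     smult (qvar ^ \<Sum>(descents m)) (qmultichoose_poly (rk top) (card (descents m))))"
proof (rule qZeta_eqI)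
  fix n :: nat assume "2 \<le> n"
  have "(\<Sum>c\<in>multichains P (n - 1). qvar ^ (\<Sum>e\<leftarrow>c. rk e)) =
      (\<Sum>m\<in>maximal_chain_lists. \<Sum>M\<in>{M\<in>multisets_of_size {..rk top} (n - 1). descents m \<subseteq> set_mset M}.
         qvar ^ sum_mset M)"
    using finite_multichains finite_maximal_chain_lists ex1_maximal_chain_list_of_multichain
    by (simp add: sum_partition_ex1[where R = "\<lambda>c m. set c \<subseteq> set m \<and> (!) m ` descents m \<subseteq> set c"]
        sum_multichains_on_maximal_chain_list)
  also have "\<dots> = (\<Sum>m\<in>maximal_chain_lists.
      qvar ^ \<Sum>(descents m) * poly (qmultichoose_poly (rk top) (card (descents m))) (qint n))"
  proof (rule sum.cong[OF refl])
    fix m assume m: "m \<in> maximal_chain_lists"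
    have D: "finite (descents m)" "descents m \<subseteq> {..rk top}" "card (descents m) \<le> rk top"
      using descents_maximal_chain_list[OF m] card_mono[of "{1..<rk top}" "descents m"]
      by (auto intro: finite_subset)
    show "(\<Sum>M\<in>{M\<in>multisets_of_size {..rk top} (n - 1). descents m \<subseteq> set_mset M}. qvar ^ sum_mset M) =
        qvar ^ \<Sum>(descents m) * poly (qmultichoose_poly (rk top) (card (descents m))) (qint n)"
      using \<open>2 \<le> n\<close>
      by (simp add: sum_qpower_multisets_containing[OF D(1,2)] poly_qmultichoose_poly[OF _ D(3)]) arith
  qed
  finally show "poly (\<Sum>m\<in>maximal_chain_lists.
      smult (qvar ^ \<Sum>(descents m)) (qmultichoose_poly (rk top) (card (descents m)))) (qint n) =
      (\<Sum>c\<in>multichains P (n - 1). qvar ^ (\<Sum>e\<leftarrow>c. rk e))"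
    by (simp add: poly_sum)
qed

text \<open>By \<open>card_mult_le_sum\<close> the truncated subtraction is harmless.\<close>

definition chain_exponent :: "'a list \<Rightarrow> nat" where
  "chain_exponent m = \<Sum>(descents m) + (\<Sum>i<rk top. i) - card (descents m) * rk top"

lemma qfact_mult_coeff_qZeta:
  "qfact (rk top) * coeff (qZeta P rk) (rk top) = (\<Sum>m\<in>maximal_chain_lists. qvar ^ chain_exponent m)"
proof -
  let ?H = "rk top"
  have "qfact ?H * coeff (qZeta P rk) ?H = (\<Sum>m\<in>maximal_chain_lists.
      qvar ^ \<Sum>(descents m) * (qfact ?H * coeff (qmultichoose_poly ?H (card (descents m))) ?H))"
    by (simp add: qZeta_eq coeff_sum sum_distrib_left mult.left_commute)
  also have "\<dots> = (\<Sum>m\<in>maximal_chain_lists. qvar ^ chain_exponent m)"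
  proof (rule sum.cong[OF refl])
    fix m assume m: "m \<in> maximal_chain_lists"
    let ?D = "descents m"
    have le: "card ?D * ?H \<le> \<Sum>?D + (\<Sum>i<?H. i)"
      using descents_maximal_chain_list[OF m] by (intro card_mult_le_sum) auto
    have "qvar ^ \<Sum>?D * (qfact ?H * coeff (qmultichoose_poly ?H (card ?D)) ?H) =
        qvar ^ (\<Sum>?D + (\<Sum>i<?H. i)) / qvar ^ (card ?D * ?H)"
      using qfact_nonzero[of ?H] by (simp add: coeff_qmultichoose_poly power_add)
    also have "\<dots> = qvar ^ chain_exponent m"
      using le by (simp add: chain_exponent_def power_diff)
    finally show "qvar ^ \<Sum>?D * (qfact ?H * coeff (qmultichoose_poly ?H (card ?D)) ?H) =
        qvar ^ chain_exponent m" .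
  qed
  finally show ?thesis .
qed

end

theorem mainTheorem7:
  fixes P :: "'a::order set" and bot top :: 'a and rk :: "'a \<Rightarrow> nat"
    and lhd :: "'b \<Rightarrow> 'b \<Rightarrow> bool" and lam :: "'a \<Rightarrow> 'a \<Rightarrow> 'b"
  assumes fin: "finite P"
    and bot: "bot \<in> P" "\<forall>x\<in>P. bot \<le> x"
    and top: "top \<in> P" "\<forall>x\<in>P. x \<le> top"
    and rk0: "rk bot = 0"
    and rk_cov: "\<forall>x y. covers P x y \<longrightarrow> rk y = rk x + 1"
    and R: "R_labelling P lhd lam"
  shows "\<exists>f :: int poly. (\<forall>i. coeff f i \<ge> 0) \<and>
           qfact (rk top) * coeff (qZeta P rk) (rk top) = ratfun_of_poly (map_poly of_int f) \<and>
           poly f 1 = int (card {C. maximal_chain P C})"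
proof -
  interpret R_labelled_graded_poset P lhd lam bot top rk
    using assms by unfold_locales auto
  define f :: "int poly" where "f = (\<Sum>m\<in>maximal_chain_lists. monom 1 (chain_exponent m))"
  have nonneg: "\<forall>i. coeff f i \<ge> 0"
    by (auto simp: f_def coeff_sum coeff_monom intro: sum_nonneg)
  have "map_poly of_int f = (\<Sum>m\<in>maximal_chain_lists. monom (1::rat) (chain_exponent m))"
    by (rule poly_eqI)
      (simp add: f_def coeff_map_poly coeff_sum coeff_monom of_int_sum if_distrib[of of_int] cong: if_cong)
  then have top_coeff: "qfact (rk top) * coeff (qZeta P rk) (rk top) = ratfun_of_poly (map_poly of_int f)"
    by (simp add: qfact_mult_coeff_qZeta ratfun_of_poly_eq_to_fract qvar_power)
  have at_1: "poly f 1 = int (card {C. maximal_chain P C})"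
    by (simp add: f_def poly_sum poly_monom card_maximal_chains)
  show ?thesis using nonneg top_coeff at_1 by blast
qed

end
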